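(* For Global SEMO using the alternative mutation operator on the weighted vertex cover problem, a solution $x$ with the two properties (1) $LP(x)=LP(0^n)-Cost(x)$ and (2) there is an optimal solution of the LP for $G(x)$ which assigns $1/2$ to each non-isolated vertex of $G(x)$, is included in the population in expected time $O\big(OPT\cdot n(\log W_{max}+\log n+OPT)\big)$.
   Context: Weighted vertex cover: $G=(V,E)$, $V=\{v_1,\dots,v_n\}$, $w:V\to\mathbb{N}^+$, $W_{max}=\max_v w(v)$; $OPT$ is the minimum weight of a vertex cover. Search points $x\in\{0,1\}^n$ ($v_i$ selected iff $x_i=1$); $Cost(x)=\sum_i w(v_i)x_i$. $G(x)=(V(x),E(x))$ with $V(x)=V\setminus\{v_i:x_i=1\}$, $E(x)$ = edges with no selected endpoint. The LP for $G(x)$: minimize $\sum_{v_i\in V(x)}w(v_i)y_i$ s.t. $y_i+y_j\ge1$ for $\{v_i,v_j\}\in E(x)$, $0\le y_i\le1$; $LP(x)$ is its optimal value. $f=(Cost,LP)$, $f(x)\le f(y)$ componentwise. Alternative mutation operator on $x$: choose $b\in\{0,1\}$ uniformly; if $b=1$, flip each $x_i$ with probability $1/2$ if $v_i$ is incident to an edge of $E(x)$ and with probability $1/n$ otherwise; if $b=0$, flip each bit independently with probability $1/n$. Global SEMO: start with uniformly random $x$, $P=\{x\}$; each iteration choose $x\in P$ uniformly, create $x'$ by the alternative mutation operator; if no $y\in P$ has $f(y)\le f(x')$, add $x'$ and delete all other $z\in P$ with $f(x')\le f(z)$. Time = number of iterations. *)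

theory Defs
  imports "HOL-Probability.Probability"
begin

text \<open>Search points are bit vectors x :: nat => bool with x i = False for i >= n
  (x i = True iff vertex v_i is selected).\<close>

definition valid_instance :: "nat \<Rightarrow> nat set set \<Rightarrow> (nat \<Rightarrow> nat) \<Rightarrow> bool" where
  "valid_instance n E w \<longleftrightarrow>
     (\<forall>e\<in>E. card e = 2 \<and> e \<subseteq> {..<n}) \<and> (\<forall>i<n. w i > 0)"

definition Wmax :: "nat \<Rightarrow> (nat \<Rightarrow> nat) \<Rightarrow> nat" where
  "Wmax n w = Max (w ` {..<n})"

definition is_vertex_cover :: "nat \<Rightarrow> nat set set \<Rightarrow> nat set \<Rightarrow> bool" where
  "is_vertex_cover n E S \<longleftrightarrow> S \<subseteq> {..<n} \<and> (\<forall>e\<in>E. e \<inter> S \<noteq> {})"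

definition OPT :: "nat \<Rightarrow> nat set set \<Rightarrow> (nat \<Rightarrow> nat) \<Rightarrow> nat" where
  "OPT n E w = Min {(\<Sum>i\<in>S. w i) | S. is_vertex_cover n E S}"

definition Cost :: "nat \<Rightarrow> (nat \<Rightarrow> nat) \<Rightarrow> (nat \<Rightarrow> bool) \<Rightarrow> nat" where
  "Cost n w x = (\<Sum>i\<in>{i. i < n \<and> x i}. w i)"

definition Vx :: "nat \<Rightarrow> (nat \<Rightarrow> bool) \<Rightarrow> nat set" where
  "Vx n x = {i. i < n \<and> \<not> x i}"

definition Ex :: "nat set set \<Rightarrow> (nat \<Rightarrow> bool) \<Rightarrow> nat set set" where
  "Ex E x = {e\<in>E. \<forall>i\<in>e. \<not> x i}"

definition nonisolated :: "nat set set \<Rightarrow> (nat \<Rightarrow> bool) \<Rightarrow> nat \<Rightarrow> bool" where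
  "nonisolated E x i \<longleftrightarrow> (\<exists>e\<in>Ex E x. i \<in> e)"

text \<open>LP relaxation for G(x). Each edge e = {v_i, v_j} gives y_i + y_j >= 1,
  written as the sum of y over e (e has exactly two elements).\<close>
definition lp_feasible :: "nat \<Rightarrow> nat set set \<Rightarrow> (nat \<Rightarrow> bool) \<Rightarrow> (nat \<Rightarrow> real) \<Rightarrow> bool" where
  "lp_feasible n E x y \<longleftrightarrow>
     (\<forall>e\<in>Ex E x. (\<Sum>i\<in>e. y i) \<ge> 1) \<and> (\<forall>i\<in>Vx n x. 0 \<le> y i \<and> y i \<le> 1)"

definition lp_obj :: "nat \<Rightarrow> (nat \<Rightarrow> nat) \<Rightarrow> (nat \<Rightarrow> bool) \<Rightarrow> (nat \<Rightarrow> real) \<Rightarrow> real" where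
  "lp_obj n w x y = (\<Sum>i\<in>Vx n x. real (w i) * y i)"

definition LP :: "nat \<Rightarrow> nat set set \<Rightarrow> (nat \<Rightarrow> nat) \<Rightarrow> (nat \<Rightarrow> bool) \<Rightarrow> real" where
  "LP n E w x = Inf {lp_obj n w x y | y. lp_feasible n E x y}"

definition lp_optimal :: "nat \<Rightarrow> nat set set \<Rightarrow> (nat \<Rightarrow> nat) \<Rightarrow> (nat \<Rightarrow> bool) \<Rightarrow> (nat \<Rightarrow> real) \<Rightarrow> bool" where
  "lp_optimal n E w x y \<longleftrightarrow> lp_feasible n E x y \<and> lp_obj n w x y = LP n E w x"

definition good_solution :: "nat \<Rightarrow> nat set set \<Rightarrow> (nat \<Rightarrow> nat) \<Rightarrow> (nat \<Rightarrow> bool) \<Rightarrow> bool" where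
  "good_solution n E w x \<longleftrightarrow>
     LP n E w x = LP n E w (\<lambda>_. False) - real (Cost n w x) \<and>
     (\<exists>y. lp_optimal n E w x y \<and> (\<forall>i\<in>Vx n x. nonisolated E x i \<longrightarrow> y i = 1/2))"

definition weakly_dom :: "nat \<Rightarrow> nat set set \<Rightarrow> (nat \<Rightarrow> nat) \<Rightarrow> (nat \<Rightarrow> bool) \<Rightarrow> (nat \<Rightarrow> bool) \<Rightarrow> bool" where
  "weakly_dom n E w a b \<longleftrightarrow> Cost n w a \<le> Cost n w b \<and> LP n E w a \<le> LP n E w b"

definition mutate :: "nat \<Rightarrow> nat set set \<Rightarrow> (nat \<Rightarrow> bool) \<Rightarrow> (nat \<Rightarrow> bool) pmf" where
  "mutate n E x =
     bind_pmf (bernoulli_pmf (1/2)) (\<lambda>b.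
       map_pmf (\<lambda>fl i. x i \<noteq> fl i)
         (Pi_pmf {..<n} False (\<lambda>i. bernoulli_pmf
            (if b \<and> nonisolated E x i then 1/2 else 1 / real n))))"

definition semo_update :: "nat \<Rightarrow> nat set set \<Rightarrow> (nat \<Rightarrow> nat) \<Rightarrow> (nat \<Rightarrow> bool) set \<Rightarrow> (nat \<Rightarrow> bool) \<Rightarrow> (nat \<Rightarrow> bool) set" where
  "semo_update n E w P x' =
     (if \<exists>y\<in>P. weakly_dom n E w y x' then P
      else insert x' {z\<in>P. \<not> weakly_dom n E w x' z})"

definition semo_step :: "nat \<Rightarrow> nat set set \<Rightarrow> (nat \<Rightarrow> nat) \<Rightarrow> (nat \<Rightarrow> bool) set \<Rightarrow> (nat \<Rightarrow> bool) set pmf" where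
  "semo_step n E w P =
     bind_pmf (pmf_of_set P) (\<lambda>x. map_pmf (semo_update n E w P) (mutate n E x))"

definition init_point :: "nat \<Rightarrow> (nat \<Rightarrow> bool) pmf" where
  "init_point n = Pi_pmf {..<n} False (\<lambda>_. bernoulli_pmf (1/2))"

definition hit :: "nat \<Rightarrow> nat set set \<Rightarrow> (nat \<Rightarrow> nat) \<Rightarrow> (nat \<Rightarrow> bool) set \<Rightarrow> bool" where
  "hit n E w P \<longleftrightarrow> (\<exists>x\<in>P. good_solution n E w x)"

text \<open>Distribution of the population after t iterations of Global SEMO, where the
  process is stopped (frozen) once a good solution has been included.  Hence
  "not hit after t iterations of the stopped process" is exactly the event that
  no good solution has been in the population at any of the times 0..t.\<close>
primrec stopped_pop :: "nat \<Rightarrow> nat set set \<Rightarrow> (nat \<Rightarrow> nat) \<Rightarrow> nat \<Rightarrow> (nat \<Rightarrow> bool) set pmf" where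
  "stopped_pop n E w 0 = map_pmf (\<lambda>x. {x}) (init_point n)"
| "stopped_pop n E w (Suc t) =
     bind_pmf (stopped_pop n E w t)
       (\<lambda>P. if hit n E w P then return_pmf P else semo_step n E w P)"

text \<open>Expected hitting time E[T] = sum over t of Pr[T > t].\<close>
definition expected_hitting_time :: "nat \<Rightarrow> nat set set \<Rightarrow> (nat \<Rightarrow> nat) \<Rightarrow> ennreal" where
  "expected_hitting_time n E w =
     (\<Sum>t. ennreal (measure_pmf.prob (stopped_pop n E w t) {P. \<not> hit n E w P}))"

end

theory Submission
  imports Defs
begin

(*
  Call x tight if LP(x) = LP(0^n) - Cost(x). Since LP(0^n) <= LP(x) + Cost(x) always (extend an
  LP solution for G(x) by ones on the selected vertices), the tight points are exactly the
  minimisers of Cost + LP. LP optima can be chosen half-integral: moving all entries at the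
  smallest fractional level a (values a and 1 - a) together either to 0 or to the next level
  keeps feasibility, and one of the two directions does not increase the objective. Hence LP
  values are half-integers in [0, OPT], and the population, whose points are pairwise
  incomparable, has at most 2 OPT + 1 members.

  A tight point that is not the target has a half-integral optimum with an entry 1; selecting
  that vertex keeps the point tight and raises its cost. So once a tight point exists, the
  potential 2^(OPT - c), with c the largest cost of a tight point in the population, halves with
  probability at least 1/(6n (2 OPT + 1)) per iteration. Before that, a cheapest point is not
  the tight point 0^n, and every single-vertex deletion from it is accepted, so the potential
  2^OPT (1 + cheapest cost) drops by the factor 1 - 1/(12n) in expectation whenever that point is
  chosen. Starting below 2^OPT (1 + n Wmax), multiplicative drift gives the bound
  O(n OPT (OPT + log n + log Wmax)).
*)

abbreviation zeros :: "nat \<Rightarrow> bool" where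
  "zeros \<equiv> \<lambda>_. False"

lemma finite_Vx [simp]: "finite (Vx n x)"
  by (simp add: Vx_def)

lemma Vx_zeros [simp]: "Vx n zeros = {..<n}"
  by (auto simp: Vx_def)

lemma Ex_zeros [simp]: "Ex E zeros = E"
  by (auto simp: Ex_def)

lemma Ex_subset_Vx:
  assumes "valid_instance n E w" "e \<in> Ex E x"
  shows "e \<subseteq> Vx n x"
  using assms by (auto simp: valid_instance_def Ex_def Vx_def)

lemma valid_instance_edgeE:
  assumes "valid_instance n E w" "e \<in> E"
  obtains i j where "e = {i, j}" "i \<noteq> j" "i < n" "j < n"
proof -
  have "card e = 2" "e \<subseteq> {..<n}"
    using assms by (auto simp: valid_instance_def)
  then obtain i j where "e = {i, j}" "i \<noteq> j"
    by (meson card_2_iff)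
  with \<open>e \<subseteq> {..<n}\<close> that show ?thesis
    by auto
qed

lemma lp_feasible_cong:
  assumes "valid_instance n E w" "\<And>i. i \<in> Vx n x \<Longrightarrow> y i = y' i"
  shows "lp_feasible n E x y \<longleftrightarrow> lp_feasible n E x y'"
proof -
  have "(\<Sum>i\<in>e. y i) = (\<Sum>i\<in>e. y' i)" if "e \<in> Ex E x" for e
    using Ex_subset_Vx[OF assms(1) that] assms(2) by (intro sum.cong) auto
  then show ?thesis
    using assms(2) unfolding lp_feasible_def by auto
qed

lemma lp_obj_cong:
  "(\<And>i. i \<in> Vx n x \<Longrightarrow> y i = y' i) \<Longrightarrow> lp_obj n w x y = lp_obj n w x y'"
  unfolding lp_obj_def by (intro sum.cong) auto

lemma lp_obj_nonneg: "lp_feasible n E x y \<Longrightarrow> 0 \<le> lp_obj n w x y"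
  unfolding lp_feasible_def lp_obj_def by (intro sum_nonneg) auto

lemma LP_le_lp_obj: "lp_feasible n E x y \<Longrightarrow> LP n E w x \<le> lp_obj n w x y"
  unfolding LP_def by (rule cInf_lower) (auto intro!: bdd_belowI[where m = 0] lp_obj_nonneg)

subsection \<open>Half-integral optimal LP solutions\<close>

definition frac_level :: "real \<Rightarrow> real" where
  "frac_level a = min a (1 - a)"

definition fractional_levels :: "nat \<Rightarrow> (nat \<Rightarrow> bool) \<Rightarrow> (nat \<Rightarrow> real) \<Rightarrow> real set" where
  "fractional_levels n x y =
     {frac_level (y i) | i. i \<in> Vx n x \<and> 0 < frac_level (y i) \<and> frac_level (y i) < 1/2}"

definition shift_level :: "real \<Rightarrow> real \<Rightarrow> (nat \<Rightarrow> real) \<Rightarrow> nat \<Rightarrow> real" where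
  "shift_level a t y = (\<lambda>k. if y k = a then t else if y k = 1 - a then 1 - t else y k)"

lemma finite_fractional_levels [simp]: "finite (fractional_levels n x y)"
proof -
  have "fractional_levels n x y \<subseteq> (\<lambda>i. frac_level (y i)) ` Vx n x"
    unfolding fractional_levels_def by auto
  then show ?thesis
    by (rule finite_subset) simp
qed

lemma frac_level_cases:
  assumes "0 \<le> b" "b \<le> 1" "a' \<le> 1/2"
    and "0 < frac_level b \<Longrightarrow> frac_level b < 1/2 \<Longrightarrow> frac_level b = a \<or> a' \<le> frac_level b"
  shows "b \<in> {0, 1, a, 1 - a} \<or> (a' \<le> b \<and> b \<le> 1 - a')"
proof (cases "b \<le> 1/2")
  case True
  then have "frac_level b = b"
    by (simp add: frac_level_def)
  with True assms show ?thesis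
    by (cases "b = 0 \<or> b = 1/2") auto
next
  case False
  then have "frac_level b = 1 - b"
    by (simp add: frac_level_def)
  with False assms show ?thesis
    by (cases "b = 1") auto
qed

lemma shift_level_edge:
  assumes "1 \<le> y i + y j" "0 < a" "a < a'" "a' \<le> 1/2" "0 \<le> t" "t \<le> a'"
    and "y i \<in> {0, 1, a, 1 - a} \<or> (a' \<le> y i \<and> y i \<le> 1 - a')"
    and "y j \<in> {0, 1, a, 1 - a} \<or> (a' \<le> y j \<and> y j \<le> 1 - a')"
  shows "1 \<le> shift_level a t y i + shift_level a t y j"
  using assms unfolding shift_level_def by (auto split: if_splits)

lemma lp_feasible_shift_level:
  assumes vi: "valid_instance n E w" and fe: "lp_feasible n E x y"
    and a: "0 < a" "a < a'" "a' \<le> 1/2" and t: "0 \<le> t" "t \<le> a'"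
    and gap: "\<And>k. k \<in> Vx n x \<Longrightarrow> y k \<in> {0, 1, a, 1 - a} \<or> (a' \<le> y k \<and> y k \<le> 1 - a')"
  shows "lp_feasible n E x (shift_level a t y)"
  unfolding lp_feasible_def
proof (rule conjI; intro ballI)
  fix e assume e: "e \<in> Ex E x"
  then have "e \<in> E"
    by (simp add: Ex_def)
  then obtain i j where ij: "e = {i, j}" "i \<noteq> j"
    by (rule valid_instance_edgeE[OF vi])
  have "i \<in> Vx n x" "j \<in> Vx n x"
    using Ex_subset_Vx[OF vi e] ij by auto
  moreover have "1 \<le> y i + y j"
    using fe e ij unfolding lp_feasible_def by auto
  ultimately have "1 \<le> shift_level a t y i + shift_level a t y j"
    by (intro shift_level_edge[where a' = a'] a t gap)
  then show "1 \<le> (\<Sum>k\<in>e. shift_level a t y k)"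
    using ij by simp
next
  fix k assume "k \<in> Vx n x"
  then have "0 \<le> y k" "y k \<le> 1"
    using fe unfolding lp_feasible_def by auto
  then show "0 \<le> shift_level a t y k \<and> shift_level a t y k \<le> 1"
    using a t unfolding shift_level_def by auto
qed

lemma lp_obj_shift_level:
  assumes "a \<noteq> 1 - a"
  shows "lp_obj n w x (shift_level a t y) = lp_obj n w x y
           + (t - a) * ((\<Sum>k\<in>{k\<in>Vx n x. y k = a}. real (w k))
                        - (\<Sum>k\<in>{k\<in>Vx n x. y k = 1 - a}. real (w k)))"
proof -
  have pointwise: "real (w k) * shift_level a t y k = real (w k) * y k
          + (t - a) * (if y k = a then real (w k) else 0)
          - (t - a) * (if y k = 1 - a then real (w k) else 0)" for k
  proof -
    consider "y k = a" | "y k = 1 - a" | "y k \<noteq> a" "y k \<noteq> 1 - a"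
      by blast
    then show ?thesis
    proof cases
      case 1
      with assms show ?thesis
        unfolding shift_level_def by (simp add: algebra_simps)
    next
      case 2
      with assms have "shift_level a t y k = 1 - t"
        unfolding shift_level_def by auto
      with 2 assms show ?thesis
        by (simp add: right_diff_distrib left_diff_distrib)
    next
      case 3
      then show ?thesis
        unfolding shift_level_def by simp
    qed
  qed
  have "lp_obj n w x (shift_level a t y) = lp_obj n w x y
          + (t - a) * (\<Sum>k\<in>Vx n x. if y k = a then real (w k) else 0)
          - (t - a) * (\<Sum>k\<in>Vx n x. if y k = 1 - a then real (w k) else 0)"
    unfolding lp_obj_def pointwise by (simp add: sum.distrib sum_subtractf sum_distrib_left)
  moreover have "(\<Sum>k\<in>Vx n x. if y k = b then real (w k) else 0) = (\<Sum>k\<in>{k\<in>Vx n x. y k = b}. real (w k))"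
    for b
    by (simp add: sum.inter_filter)
  ultimately show ?thesis
    by (simp add: right_diff_distrib)
qed

lemma fractional_levels_shift_level:
  assumes a: "0 < a" "a < 1/2" and t: "t \<in> {0, 1/2} \<union> fractional_levels n x y" "t \<noteq> a"
  shows "fractional_levels n x (shift_level a t y) \<subseteq> fractional_levels n x y - {a}"
proof
  fix d assume "d \<in> fractional_levels n x (shift_level a t y)"
  then obtain k where k: "k \<in> Vx n x" "d = frac_level (shift_level a t y k)" "0 < d" "d < 1/2"
    unfolding fractional_levels_def by auto
  show "d \<in> fractional_levels n x y - {a}"
  proof (cases "y k = a \<or> y k = 1 - a")
    case True
    have "t \<le> 1/2"
      using t(1) unfolding fractional_levels_def by auto
    with True have "d = t"
      using k(2) a t unfolding shift_level_def frac_level_def by (auto simp: min_def)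
    with k(3,4) t show ?thesis
      by auto
  next
    case False
    then have "shift_level a t y k = y k" "frac_level (y k) \<noteq> a"
      unfolding shift_level_def frac_level_def by (auto simp: min_def)
    with k show ?thesis
      unfolding fractional_levels_def by auto
  qed
qed
lemma lp_reduce_fractional_levels:
  assumes vi: "valid_instance n E w" and fe: "lp_feasible n E x y"
    and ne: "fractional_levels n x y \<noteq> {}"
  obtains y' where "lp_feasible n E x y'" "lp_obj n w x y' \<le> lp_obj n w x y"
    "fractional_levels n x y' \<subset> fractional_levels n x y"
proof -
  let ?D = "fractional_levels n x y"
  define a where "a = Min ?D"
  define a' where "a' = Min (insert (1/2) {b\<in>?D. a < b})"
  have aD: "a \<in> ?D" and a_min: "\<And>b. b \<in> ?D \<Longrightarrow> a \<le> b"
    using ne unfolding a_def by auto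
  then have a: "0 < a" "a < 1/2"
    unfolding fractional_levels_def by auto
  have a'_in: "a' \<in> insert (1/2) {b\<in>?D. a < b}"
    unfolding a'_def by (intro Min_in) auto
  have a'_min: "\<And>b. b \<in> ?D \<Longrightarrow> a < b \<Longrightarrow> a' \<le> b"
    unfolding a'_def by auto
  have a'_half: "a' \<le> 1/2"
    unfolding a'_def by (rule Min_le) auto
  have a_a': "a < a'"
    using a'_in a by auto
  have gap: "y k \<in> {0, 1, a, 1 - a} \<or> (a' \<le> y k \<and> y k \<le> 1 - a')" if k: "k \<in> Vx n x" for k
  proof (rule frac_level_cases)
    show "0 \<le> y k" "y k \<le> 1"
      using fe k unfolding lp_feasible_def by auto
    assume "0 < frac_level (y k)" "frac_level (y k) < 1/2"
    with k have "frac_level (y k) \<in> ?D"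
      unfolding fractional_levels_def by auto
    with a_min a'_min show "frac_level (y k) = a \<or> a' \<le> frac_level (y k)"
      by force
  qed (rule a'_half)
  define Wa where "Wa = (\<Sum>k\<in>{k\<in>Vx n x. y k = a}. real (w k))"
  define Wa' where "Wa' = (\<Sum>k\<in>{k\<in>Vx n x. y k = 1 - a}. real (w k))"
  \<comment> \<open>The objective is linear in the new level, so \<open>0\<close> or \<open>a'\<close> is no worse than \<open>a\<close>.\<close>
  define t where "t = (if Wa' \<le> Wa then 0 else a')"
  have t: "0 \<le> t" "t \<le> a'" "t \<in> {0, 1/2} \<union> ?D" "t \<noteq> a"
    using a a_a' a'_in unfolding t_def by auto
  have "a \<noteq> 1 - a"
    using a by simp
  then have "lp_obj n w x (shift_level a t y) = lp_obj n w x y + (t - a) * (Wa - Wa')"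
    unfolding Wa_def Wa'_def by (rule lp_obj_shift_level)
  moreover have "(t - a) * (Wa - Wa') \<le> 0"
    using a a_a' unfolding t_def by (auto simp: mult_nonpos_nonneg mult_nonneg_nonpos)
  moreover have "fractional_levels n x (shift_level a t y) \<subset> ?D"
    using fractional_levels_shift_level[OF a t(3,4)] aD by blast
  ultimately show ?thesis
    using that lp_feasible_shift_level[OF vi fe a(1) a_a' a'_half t(1,2) gap] by simp
qed

lemma lp_round_fractional_levels:
  assumes vi: "valid_instance n E w" and fe: "lp_feasible n E x y"
  obtains y' where "lp_feasible n E x y'" "lp_obj n w x y' \<le> lp_obj n w x y"
    "fractional_levels n x y' = {}"
  using fe
proof (induction "card (fractional_levels n x y)" arbitrary: y thesis rule: less_induct)
  case less
  show ?case
  proof (cases "fractional_levels n x y = {}")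
    case True
    then show ?thesis
      using less.prems by blast
  next
    case False
    then obtain y1 where y1: "lp_feasible n E x y1" "lp_obj n w x y1 \<le> lp_obj n w x y"
      "fractional_levels n x y1 \<subset> fractional_levels n x y"
      using lp_reduce_fractional_levels[OF vi less.prems(2)] by blast
    then have "card (fractional_levels n x y1) < card (fractional_levels n x y)"
      by (simp add: psubset_card_mono)
    then obtain y2 where "lp_feasible n E x y2" "lp_obj n w x y2 \<le> lp_obj n w x y1"
      "fractional_levels n x y2 = {}"
      using less.hyps[OF _ _ y1(1)] by blast
    then show ?thesis
      using less.prems(1) y1(2) by simp
  qed
qed

definition half_integral :: "nat \<Rightarrow> (nat \<Rightarrow> bool) \<Rightarrow> (nat \<Rightarrow> real) \<Rightarrow> bool" where
  "half_integral n x y \<longleftrightarrow> (\<forall>i\<in>Vx n x. y i \<in> {0, 1/2, 1}) \<and> (\<forall>i. i \<notin> Vx n x \<longrightarrow> y i = 0)"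

lemma finite_half_integral: "finite {y. half_integral n x y}"
proof -
  let ?ext = "\<lambda>f i. if i \<in> Vx n x then f i else (0::real)"
  have "{y. half_integral n x y} \<subseteq> ?ext ` (Vx n x \<rightarrow>\<^sub>E {0, 1/2, 1})"
  proof
    fix y assume "y \<in> {y. half_integral n x y}"
    then have "y = ?ext (restrict y (Vx n x))" "restrict y (Vx n x) \<in> Vx n x \<rightarrow>\<^sub>E {0, 1/2, 1}"
      unfolding half_integral_def by (auto simp: fun_eq_iff)
    then show "y \<in> ?ext ` (Vx n x \<rightarrow>\<^sub>E {0, 1/2, 1})"
      by blast
  qed
  moreover have "finite (Vx n x \<rightarrow>\<^sub>E {0::real, 1/2, 1})"
    by (intro finite_PiE) auto
  ultimately show ?thesis
    using finite_subset by blast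
qed

lemma lp_round_half_integral:
  assumes vi: "valid_instance n E w" and fe: "lp_feasible n E x y"
  obtains y' where "lp_feasible n E x y'" "lp_obj n w x y' \<le> lp_obj n w x y" "half_integral n x y'"
proof -
  obtain y1 where y1: "lp_feasible n E x y1" "lp_obj n w x y1 \<le> lp_obj n w x y"
    "fractional_levels n x y1 = {}"
    using lp_round_fractional_levels[OF vi fe] .
  define y2 where "y2 = (\<lambda>i. if i \<in> Vx n x then y1 i else 0)"
  have "lp_feasible n E x y2"
    using y1(1) lp_feasible_cong[OF vi, of x y1 y2] unfolding y2_def by auto
  moreover have "lp_obj n w x y2 = lp_obj n w x y1"
    unfolding y2_def by (intro lp_obj_cong) auto
  moreover have "y1 i \<in> {0, 1/2, 1}" if "i \<in> Vx n x" for i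
  proof -
    have "0 \<le> y1 i" "y1 i \<le> 1"
      using y1(1) that unfolding lp_feasible_def by auto
    moreover have "\<not> (0 < frac_level (y1 i) \<and> frac_level (y1 i) < 1/2)"
      using y1(3) that unfolding fractional_levels_def by blast
    ultimately show ?thesis
      unfolding frac_level_def by (auto simp: min_def split: if_splits)
  qed
  then have "half_integral n x y2"
    unfolding half_integral_def y2_def by auto
  ultimately show ?thesis
    using that y1(2) by auto
qed

lemma lp_feasible_ones:
  assumes vi: "valid_instance n E w"
  shows "lp_feasible n E x (\<lambda>_. 1)"
  unfolding lp_feasible_def
proof (rule conjI; intro ballI)
  fix e assume "e \<in> Ex E x"
  then have "e \<in> E"
    by (simp add: Ex_def)
  then obtain i j where "e = {i, j}" "i \<noteq> j"
    by (rule valid_instance_edgeE[OF vi])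
  then show "1 \<le> (\<Sum>i\<in>e. 1::real)"
    by simp
qed simp

lemma LP_attained_half_integral:
  assumes vi: "valid_instance n E w"
  obtains y where "lp_optimal n E w x y" "half_integral n x y"
proof -
  define H where "H = {y. half_integral n x y \<and> lp_feasible n E x y}"
  have "finite H"
    unfolding H_def using finite_half_integral by (rule finite_subset[rotated]) auto
  moreover obtain y0 where "y0 \<in> H"
    using lp_round_half_integral[OF vi lp_feasible_ones[OF vi]] unfolding H_def by blast
  ultimately obtain ys where ys: "ys \<in> H" "lp_obj n w x ys = Min (lp_obj n w x ` H)"
    using Min_in[of "lp_obj n w x ` H"] by (metis empty_iff finite_imageI image_iff image_is_empty)
  then have ys_min: "lp_obj n w x ys \<le> lp_obj n w x y" if "y \<in> H" for y
    using \<open>finite H\<close> that by simp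
  have "lp_obj n w x ys \<le> lp_obj n w x y" if fe: "lp_feasible n E x y" for y
  proof -
    obtain y' where "lp_feasible n E x y'" "lp_obj n w x y' \<le> lp_obj n w x y" "half_integral n x y'"
      using lp_round_half_integral[OF vi fe] .
    then show ?thesis
      using ys_min[of y'] unfolding H_def by auto
  qed
  then have "LP n E w x = lp_obj n w x ys"
    unfolding LP_def using ys(1) H_def by (intro cInf_eq_minimum) auto
  then show ?thesis
    using that ys(1) unfolding H_def lp_optimal_def by auto
qed

lemma LP_half_integer:
  assumes vi: "valid_instance n E w"
  obtains k :: nat where "LP n E w x = real k / 2"
proof -
  obtain y where y: "lp_optimal n E w x y" "half_integral n x y"
    using LP_attained_half_integral[OF vi] .
  define m where "m = (\<lambda>i. if y i = 0 then 0 else if y i = 1/2 then 1 else (2::nat))"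
  have "y i = real (m i) / 2" if "i \<in> Vx n x" for i
    using y(2) that unfolding half_integral_def m_def by auto
  then have "lp_obj n w x y = (\<Sum>i\<in>Vx n x. real (w i * m i) / 2)"
    unfolding lp_obj_def by (intro sum.cong) auto
  also have "\<dots> = real (\<Sum>i\<in>Vx n x. w i * m i) / 2"
    by (simp add: sum_divide_distrib)
  finally show ?thesis
    using that y(1) unfolding lp_optimal_def by metis
qed

subsection \<open>Tight solutions\<close>

lemma Cost_le_total_weight: "Cost n w x \<le> (\<Sum>i<n. w i)"
  unfolding Cost_def by (rule sum_mono2) auto

lemma Cost_zeros [simp]: "Cost n w zeros = 0"
  by (simp add: Cost_def)

lemma Cost_select:
  assumes "v < n" "\<not> x v"
  shows "Cost n w (x(v := True)) = Cost n w x + w v"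
proof -
  have "{i. i < n \<and> (x(v := True)) i} = insert v {i. i < n \<and> x i}"
    using assms by auto
  then show ?thesis
    unfolding Cost_def using assms by simp
qed

lemma Cost_deselect:
  assumes "v < n" "x v"
  shows "Cost n w (x(v := False)) + w v = Cost n w x"
proof -
  have "(x(v := False))(v := True) = x"
    using assms by (auto simp: fun_eq_iff)
  then show ?thesis
    using Cost_select[of v n "x(v := False)" w] assms by simp
qed

lemma lp_feasible_select_ones:
  assumes vi: "valid_instance n E w" and fe: "lp_feasible n E x y"
  shows "lp_feasible n E zeros (\<lambda>i. if x i then 1 else y i)"
  unfolding lp_feasible_def Ex_zeros Vx_zeros
proof (rule conjI; intro ballI)
  have y01: "0 \<le> y i \<and> y i \<le> 1" if "i < n" "\<not> x i" for i
    using fe that unfolding lp_feasible_def Vx_def by auto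
  fix e assume e: "e \<in> E"
  then obtain i j where ij: "e = {i, j}" "i \<noteq> j" "i < n" "j < n"
    by (rule valid_instance_edgeE[OF vi])
  show "1 \<le> (\<Sum>k\<in>e. if x k then 1 else y k)"
  proof (cases "x i \<or> x j")
    case True
    then show ?thesis
      using ij y01[of i] y01[of j] by auto
  next
    case False
    then have "e \<in> Ex E x"
      using e ij by (auto simp: Ex_def)
    then have "1 \<le> sum y e"
      using fe unfolding lp_feasible_def by auto
    with False ij show ?thesis
      by simp
  qed
next
  fix i assume "i \<in> {..<n}"
  then show "0 \<le> (if x i then 1 else y i) \<and> (if x i then 1 else y i) \<le> (1::real)"
    using fe unfolding lp_feasible_def Vx_def by auto
qed

lemma LP_zeros_le_LP_add_Cost:
  assumes vi: "valid_instance n E w"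
  shows "LP n E w zeros \<le> LP n E w x + real (Cost n w x)"
proof -
  obtain y where y: "lp_optimal n E w x y"
    using LP_attained_half_integral[OF vi] .
  define y0 where "y0 = (\<lambda>i. if x i then 1 else y i)"
  have fe: "lp_feasible n E zeros y0"
    unfolding y0_def using y lp_feasible_select_ones[OF vi] unfolding lp_optimal_def by blast
  have "{..<n} = {i. i < n \<and> x i} \<union> Vx n x" "{i. i < n \<and> x i} \<inter> Vx n x = {}"
    by (auto simp: Vx_def)
  then have "lp_obj n w zeros y0
      = (\<Sum>i\<in>{i. i < n \<and> x i}. real (w i) * y0 i) + (\<Sum>i\<in>Vx n x. real (w i) * y0 i)"
    unfolding lp_obj_def Vx_zeros by (simp add: sum.union_disjoint)
  also have "\<dots> = real (Cost n w x) + lp_obj n w x y"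
    unfolding Cost_def lp_obj_def y0_def Vx_def by simp
  finally show ?thesis
    using LP_le_lp_obj[OF fe, of w] y unfolding lp_optimal_def by simp
qed

lemma LP_le_LP_zeros:
  assumes vi: "valid_instance n E w"
  shows "LP n E w x \<le> LP n E w zeros"
proof -
  obtain y where y: "lp_optimal n E w zeros y"
    using LP_attained_half_integral[OF vi] .
  then have fe: "lp_feasible n E x y"
    unfolding lp_optimal_def lp_feasible_def by (auto simp: Ex_def Vx_def)
  have "lp_obj n w x y \<le> lp_obj n w zeros y"
    using y unfolding lp_obj_def lp_optimal_def lp_feasible_def
    by (intro sum_mono2) (auto simp: Vx_def)
  then show ?thesis
    using LP_le_lp_obj[OF fe, of w] y unfolding lp_optimal_def by simp
qed

lemma OPT_attained:
  assumes vi: "valid_instance n E w"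
  obtains S where "is_vertex_cover n E S" "OPT n E w = (\<Sum>i\<in>S. w i)"
proof -
  let ?A = "{(\<Sum>i\<in>S. w i) | S. is_vertex_cover n E S}"
  have "?A \<subseteq> (\<lambda>S. \<Sum>i\<in>S. w i) ` Pow {..<n}"
    by (auto simp: is_vertex_cover_def)
  then have "finite ?A"
    by (rule finite_subset) simp
  moreover have "is_vertex_cover n E {..<n}"
    unfolding is_vertex_cover_def
  proof (intro conjI ballI)
    fix e assume "e \<in> E"
    then obtain i j where "e = {i, j}" "i < n"
      by (rule valid_instance_edgeE[OF vi])
    then show "e \<inter> {..<n} \<noteq> {}"
      by auto
  qed simp
  then have "?A \<noteq> {}"
    by blast
  ultimately have "OPT n E w \<in> ?A"
    unfolding OPT_def by (rule Min_in)
  then show ?thesis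
    using that by blast
qed

lemma one_le_OPT:
  assumes vi: "valid_instance n E w" and ne: "E \<noteq> {}"
  shows "1 \<le> OPT n E w"
proof -
  obtain S where S: "is_vertex_cover n E S" "OPT n E w = (\<Sum>i\<in>S. w i)"
    using OPT_attained[OF vi] .
  obtain i where i: "i \<in> S"
    using S(1) ne unfolding is_vertex_cover_def by blast
  have "i < n" "finite S"
    using S(1) i unfolding is_vertex_cover_def by (auto intro: finite_subset)
  then have "w i \<le> (\<Sum>i\<in>S. w i)" "0 < w i"
    using i vi by (auto simp: valid_instance_def intro: member_le_sum)
  then show ?thesis
    using S(2) by linarith
qed

lemma LP_zeros_le_OPT:
  assumes vi: "valid_instance n E w"
  shows "LP n E w zeros \<le> real (OPT n E w)"
proof -
  obtain S where S: "is_vertex_cover n E S" "OPT n E w = (\<Sum>i\<in>S. w i)"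
    using OPT_attained[OF vi] .
  define y where "y = (\<lambda>i. if i \<in> S then 1 else (0::real))"
  have S_sub: "S \<subseteq> {..<n}"
    using S(1) by (simp add: is_vertex_cover_def)
  have fe: "lp_feasible n E zeros y"
    unfolding lp_feasible_def Ex_zeros Vx_zeros
  proof (rule conjI; intro ballI)
    fix e assume e: "e \<in> E"
    then obtain i j where ij: "e = {i, j}" "i \<noteq> j"
      by (rule valid_instance_edgeE[OF vi])
    have "e \<inter> S \<noteq> {}"
      using S(1) e by (simp add: is_vertex_cover_def)
    then show "1 \<le> sum y e"
      using ij unfolding y_def by auto
  qed (simp add: y_def)
  have "lp_obj n w zeros y = (\<Sum>i\<in>{..<n} \<inter> S. real (w i))"
    unfolding lp_obj_def Vx_zeros y_def by (simp add: sum.inter_restrict if_distrib cong: if_cong)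
  also have "{..<n} \<inter> S = S"
    using S_sub by blast
  finally show ?thesis
    using LP_le_lp_obj[OF fe, of w] S(2) by simp
qed

definition lp_tight :: "nat \<Rightarrow> nat set set \<Rightarrow> (nat \<Rightarrow> nat) \<Rightarrow> (nat \<Rightarrow> bool) \<Rightarrow> bool" where
  "lp_tight n E w x \<longleftrightarrow> LP n E w x = LP n E w zeros - real (Cost n w x)"

lemma lp_tight_zeros: "lp_tight n E w zeros"
  by (simp add: lp_tight_def)

lemma lp_tight_Cost_le_OPT:
  assumes vi: "valid_instance n E w" and tight: "lp_tight n E w x"
  shows "Cost n w x \<le> OPT n E w"
proof -
  obtain y where "lp_optimal n E w x y"
    using LP_attained_half_integral[OF vi] .
  then have "0 \<le> LP n E w x"
    using lp_obj_nonneg unfolding lp_optimal_def by metis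
  then show ?thesis
    using tight LP_zeros_le_OPT[OF vi] unfolding lp_tight_def by linarith
qed

text \<open>Tight points minimise \<open>Cost + LP\<close>.\<close>
lemma lp_tight_if_weakly_dom:
  assumes vi: "valid_instance n E w" and tight: "lp_tight n E w x" and wd: "weakly_dom n E w z x"
  shows "lp_tight n E w z" "Cost n w z = Cost n w x"
  using LP_zeros_le_LP_add_Cost[OF vi, of z] tight wd
  unfolding lp_tight_def weakly_dom_def by simp_all

lemma lp_tight_select:
  assumes vi: "valid_instance n E w" and tight: "lp_tight n E w x"
    and y: "lp_optimal n E w x y" and v: "v \<in> Vx n x" "y v = 1"
  shows "lp_tight n E w (x(v := True))"
proof -
  let ?x' = "x(v := True)"
  have v_lt: "v < n" and v_unsel: "\<not> x v"
    using v by (auto simp: Vx_def)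
  have Vx': "Vx n ?x' = Vx n x - {v}"
    by (auto simp: Vx_def)
  have fe: "lp_feasible n E ?x' y"
    using y unfolding lp_optimal_def lp_feasible_def Vx' by (auto simp: Ex_def)
  have "lp_obj n w ?x' y = lp_obj n w x y - real (w v)"
    unfolding lp_obj_def Vx' using v by (simp add: sum_diff1)
  then have "LP n E w ?x' \<le> LP n E w x - real (w v)"
    using LP_le_lp_obj[OF fe, of w] y unfolding lp_optimal_def by simp
  then show ?thesis
    using LP_zeros_le_LP_add_Cost[OF vi, of ?x'] tight Cost_select[of v n x w, OF v_lt v_unsel]
    unfolding lp_tight_def by simp
qed

lemma good_solution_if_no_one:
  assumes vi: "valid_instance n E w" and tight: "lp_tight n E w x"
    and y: "lp_optimal n E w x y" "half_integral n x y" and no_one: "\<forall>v\<in>Vx n x. y v \<noteq> 1"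
  shows "good_solution n E w x"
  unfolding good_solution_def
proof (intro conjI exI[of _ y] ballI impI)
  show "LP n E w x = LP n E w zeros - real (Cost n w x)"
    using tight unfolding lp_tight_def .
  show "lp_optimal n E w x y"
    by (fact y(1))
  fix i assume i: "i \<in> Vx n x" and "nonisolated E x i"
  then obtain e where e: "e \<in> Ex E x" "i \<in> e"
    unfolding nonisolated_def by blast
  then have "e \<in> E"
    by (simp add: Ex_def)
  then obtain a b where "e = {a, b}" "a \<noteq> b"
    by (rule valid_instance_edgeE[OF vi])
  with e(2) obtain j where j: "e = {i, j}" "i \<noteq> j"
    by auto
  have "j \<in> Vx n x"
    using Ex_subset_Vx[OF vi e(1)] j by auto
  then have "y i \<in> {0, 1/2}" "y j \<in> {0, 1/2}"
    using y(2) no_one i unfolding half_integral_def by auto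
  moreover have "1 \<le> y i + y j"
    using y(1) e(1) j unfolding lp_optimal_def lp_feasible_def by auto
  ultimately show "y i = 1/2"
    by auto
qed

lemma lp_tight_extend:
  assumes vi: "valid_instance n E w" and tight: "lp_tight n E w x" and "\<not> good_solution n E w x"
  obtains v where "v < n" "\<not> x v" "lp_tight n E w (x(v := True))"
proof -
  obtain y where y: "lp_optimal n E w x y" "half_integral n x y"
    using LP_attained_half_integral[OF vi] .
  then obtain v where "v \<in> Vx n x" "y v = 1"
    using good_solution_if_no_one[OF vi tight] assms(3) by blast
  then show ?thesis
    using that lp_tight_select[OF vi tight y(1)] by (auto simp: Vx_def)
qed

subsection \<open>The population of Global SEMO\<close>

definition in_search_space :: "nat \<Rightarrow> (nat \<Rightarrow> bool) \<Rightarrow> bool" where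
  "in_search_space n x \<longleftrightarrow> (\<forall>i\<ge>n. \<not> x i)"

definition semo_invariant :: "nat \<Rightarrow> nat set set \<Rightarrow> (nat \<Rightarrow> nat) \<Rightarrow> (nat \<Rightarrow> bool) set \<Rightarrow> bool" where
  "semo_invariant n E w P \<longleftrightarrow> finite P \<and> P \<noteq> {} \<and> (\<forall>x\<in>P. in_search_space n x) \<and>
     (\<forall>a\<in>P. \<forall>b\<in>P. a \<noteq> b \<longrightarrow> \<not> weakly_dom n E w a b)"

lemma weakly_dom_refl: "weakly_dom n E w a a"
  by (simp add: weakly_dom_def)

lemma semo_invariant_update:
  assumes "semo_invariant n E w P" "in_search_space n x'"
  shows "semo_invariant n E w (semo_update n E w P x')"
proof (cases "\<exists>y\<in>P. weakly_dom n E w y x'")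
  case False
  then have "x' \<notin> P"
    using weakly_dom_refl by blast
  with assms False show ?thesis
    unfolding semo_update_def semo_invariant_def by auto
qed (use assms in \<open>simp add: semo_update_def\<close>)

lemma in_search_space_mutate:
  assumes "in_search_space n x" "x' \<in> set_pmf (mutate n E x)"
  shows "in_search_space n x'"
  unfolding in_search_space_def
proof (intro allI impI)
  fix i assume i: "n \<le> i"
  from assms(2) obtain b fl where
    fl: "fl \<in> set_pmf (Pi_pmf {..<n} False (\<lambda>i. bernoulli_pmf
            (if b \<and> nonisolated E x i then 1/2 else 1 / real n)))" and "x' = (\<lambda>i. x i \<noteq> fl i)"
    unfolding mutate_def by auto
  moreover have "\<not> fl i"
    using set_Pi_pmf_subset[of "{..<n}" False] fl i by fastforce
  ultimately show "\<not> x' i"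
    using assms(1) i unfolding in_search_space_def by simp
qed

lemma Cost_eq_zero_iff:
  assumes vi: "valid_instance n E w" and x: "in_search_space n x"
  shows "Cost n w x = 0 \<longleftrightarrow> x = zeros"
proof
  assume "Cost n w x = 0"
  then have "\<not> x i" if "i < n" for i
    using vi that member_le_sum[of i "{i. i < n \<and> x i}" w]
    unfolding Cost_def valid_instance_def by fastforce
  with x show "x = zeros"
    unfolding in_search_space_def by (intro ext) (metis leI)
qed simp

text \<open>LP values are half-integers in \<open>[0, OPT]\<close> and incomparable points have distinct LP values.\<close>
lemma card_population_le:
  assumes vi: "valid_instance n E w" and inv: "semo_invariant n E w P"
  shows "card P \<le> 2 * OPT n E w + 1"
proof -
  define g where "g x = nat \<lfloor>2 * LP n E w x\<rfloor>" for x
  have g: "real (g x) = 2 * LP n E w x" for x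
  proof -
    obtain k :: nat where "LP n E w x = real k / 2"
      using LP_half_integer[OF vi] .
    then have "2 * LP n E w x = real k"
      by simp
    then show ?thesis
      unfolding g_def by simp
  qed
  have "inj_on g P"
  proof (rule inj_onI)
    fix a b assume ab: "a \<in> P" "b \<in> P" "g a = g b"
    then have "LP n E w a = LP n E w b"
      using g[of a] g[of b] by simp
    then have "weakly_dom n E w a b \<or> weakly_dom n E w b a"
      unfolding weakly_dom_def by (simp add: nat_le_linear)
    moreover have "\<forall>a\<in>P. \<forall>b\<in>P. a \<noteq> b \<longrightarrow> \<not> weakly_dom n E w a b"
      using inv by (simp add: semo_invariant_def)
    ultimately show "a = b"
      using ab(1,2) by metis
  qed
  moreover have "g ` P \<subseteq> {..2 * OPT n E w}"
  proof
    fix k assume "k \<in> g ` P"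
    then obtain x where "k = g x"
      by blast
    moreover have "LP n E w x \<le> real (OPT n E w)"
      using LP_le_LP_zeros[OF vi] LP_zeros_le_OPT[OF vi] order_trans by blast
    ultimately show "k \<in> {..2 * OPT n E w}"
      using g[of x] by simp
  qed
  ultimately show ?thesis
    using card_mono[of "{..2 * OPT n E w}" "g ` P"] card_image by fastforce
qed

lemma lp_tight_in_semo_update:
  assumes vi: "valid_instance n E w" and y: "y \<in> P" "lp_tight n E w y"
  shows "y \<in> semo_update n E w P x'"
proof (cases "\<exists>z\<in>P. weakly_dom n E w z x'")
  case False
  have "\<not> weakly_dom n E w x' y"
  proof
    assume wd: "weakly_dom n E w x' y"
    then have "weakly_dom n E w y x'"
      using lp_tight_if_weakly_dom[OF vi y(2) wd] y(2)
      unfolding weakly_dom_def lp_tight_def by simp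
    with False y show False
      by blast
  qed
  with y False show ?thesis
    by (simp add: semo_update_def)
qed (use y in \<open>simp add: semo_update_def\<close>)

lemma semo_update_accepts_tight:
  assumes vi: "valid_instance n E w" and tight: "lp_tight n E w x'"
    and gt: "\<And>z. z \<in> P \<Longrightarrow> lp_tight n E w z \<Longrightarrow> Cost n w z < Cost n w x'"
  shows "x' \<in> semo_update n E w P x'"
proof -
  have "\<not> weakly_dom n E w z x'" if "z \<in> P" for z
    using lp_tight_if_weakly_dom[OF vi tight, of z] gt[OF that] by auto
  then show ?thesis
    by (simp add: semo_update_def)
qed

lemma semo_update_accepts_cheaper:
  assumes "\<And>z. z \<in> P \<Longrightarrow> Cost n w x' < Cost n w z"
  shows "x' \<in> semo_update n E w P x'"
proof -
  have "\<not> weakly_dom n E w z x'" if "z \<in> P" for z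
    using assms[OF that] by (simp add: weakly_dom_def)
  then show ?thesis
    by (simp add: semo_update_def)
qed

lemma semo_update_keeps_cost:
  assumes "m \<in> P"
  obtains z where "z \<in> semo_update n E w P x'" "Cost n w z \<le> Cost n w m"
proof (cases "weakly_dom n E w x' m \<and> \<not> (\<exists>y\<in>P. weakly_dom n E w y x')")
  case True
  then have "x' \<in> semo_update n E w P x'" "Cost n w x' \<le> Cost n w m"
    by (auto simp: semo_update_def weakly_dom_def)
  then show ?thesis
    by (rule that)
next
  case False
  with assms have "m \<in> semo_update n E w P x'"
    by (auto simp: semo_update_def)
  then show ?thesis
    using that by blast
qed

subsection \<open>The potential\<close>

definition min_cost :: "nat \<Rightarrow> (nat \<Rightarrow> nat) \<Rightarrow> (nat \<Rightarrow> bool) set \<Rightarrow> nat" where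
  "min_cost n w P = Min (Cost n w ` P)"

definition max_tight_cost :: "nat \<Rightarrow> nat set set \<Rightarrow> (nat \<Rightarrow> nat) \<Rightarrow> (nat \<Rightarrow> bool) set \<Rightarrow> nat" where
  "max_tight_cost n E w P = Max (Cost n w ` {x\<in>P. lp_tight n E w x})"

text \<open>Before a tight point is found the potential is at least \<open>2 ^ OPT\<close>, afterwards at most
  \<open>2 ^ OPT\<close>, so it never increases when the first tight point enters.\<close>
definition potential :: "nat \<Rightarrow> nat set set \<Rightarrow> (nat \<Rightarrow> nat) \<Rightarrow> (nat \<Rightarrow> bool) set \<Rightarrow> real" where
  "potential n E w P =
     (if hit n E w P \<or> P = {} then 0
      else if \<exists>x\<in>P. lp_tight n E w x then 2 ^ (OPT n E w - max_tight_cost n E w P)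
      else 2 ^ OPT n E w * (1 + real (min_cost n w P)))"

lemma finite_Cost_image: "finite (Cost n w ` A)"
  by (rule finite_subset[of _ "{..(\<Sum>i<n. w i)}"]) (auto intro: Cost_le_total_weight)

lemma min_cost_le: "x \<in> P \<Longrightarrow> min_cost n w P \<le> Cost n w x"
  unfolding min_cost_def using finite_Cost_image by (intro Min_le) auto

lemma min_cost_attained:
  assumes "P \<noteq> {}"
  obtains m where "m \<in> P" "min_cost n w P = Cost n w m"
proof -
  have "min_cost n w P \<in> Cost n w ` P"
    unfolding min_cost_def using finite_Cost_image assms by (intro Min_in) auto
  then show ?thesis
    using that by blast
qed

lemma max_tight_cost_ge: "x \<in> P \<Longrightarrow> lp_tight n E w x \<Longrightarrow> Cost n w x \<le> max_tight_cost n E w P"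
  unfolding max_tight_cost_def using finite_Cost_image by (intro Max_ge) auto

lemma max_tight_cost_attained:
  assumes "x \<in> P" "lp_tight n E w x"
  obtains m where "m \<in> P" "lp_tight n E w m" "max_tight_cost n E w P = Cost n w m"
proof -
  have "max_tight_cost n E w P \<in> Cost n w ` {x\<in>P. lp_tight n E w x}"
    unfolding max_tight_cost_def using finite_Cost_image assms by (intro Max_in) auto
  then show ?thesis
    using that by blast
qed

lemma potential_nonneg: "0 \<le> potential n E w P"
  unfolding potential_def by auto

lemma potential_le: "potential n E w P \<le> 2 ^ OPT n E w * (1 + real (\<Sum>i<n. w i))"
proof -
  have "(2::real) ^ (OPT n E w - max_tight_cost n E w P) \<le> 2 ^ OPT n E w"
    by (intro power_increasing) auto
  also have "\<dots> \<le> 2 ^ OPT n E w * (1 + real (\<Sum>i<n. w i))"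
    by (simp del: of_nat_sum)
  finally have tight: "(2::real) ^ (OPT n E w - max_tight_cost n E w P) \<le> \<dots>" .
  have "P \<noteq> {} \<Longrightarrow> min_cost n w P \<le> (\<Sum>i<n. w i)"
    by (metis min_cost_attained Cost_le_total_weight)
  then have "P \<noteq> {} \<Longrightarrow> (2::real) ^ OPT n E w * (1 + real (min_cost n w P))
              \<le> 2 ^ OPT n E w * (1 + real (\<Sum>i<n. w i))"
    by (intro mult_left_mono add_left_mono) (simp_all del: of_nat_sum)
  with tight show ?thesis
    unfolding potential_def by (auto simp: sum_nonneg)
qed

lemma abs_potential_le: "\<bar>potential n E w P\<bar> \<le> 2 ^ OPT n E w * (1 + real (\<Sum>i<n. w i))"
  using potential_le potential_nonneg by (metis abs_of_nonneg)

lemma one_le_potential: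
  assumes "\<not> hit n E w P" "P \<noteq> {}"
  shows "1 \<le> potential n E w P"
proof -
  have "(1::real) \<le> 2 ^ k * (1 + real c)" for k c
    using mult_mono[of 1 "(2::real) ^ k" 1 "1 + real c"] by simp
  then show ?thesis
    using assms unfolding potential_def by auto
qed

lemma potential_semo_update_le:
  assumes vi: "valid_instance n E w" and inv: "semo_invariant n E w P" and nh: "\<not> hit n E w P"
    and x': "in_search_space n x'"
  shows "potential n E w (semo_update n E w P x') \<le> potential n E w P"
proof -
  let ?P' = "semo_update n E w P x'" and ?L = "OPT n E w"
  have ne: "P \<noteq> {}" "?P' \<noteq> {}"
    using inv semo_invariant_update[OF inv x'] by (auto simp: semo_invariant_def)
  consider "hit n E w ?P'" | "\<not> hit n E w ?P'" "\<exists>x\<in>P. lp_tight n E w x"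
    | "\<not> hit n E w ?P'" "\<forall>x\<in>P. \<not> lp_tight n E w x" "\<exists>x\<in>?P'. lp_tight n E w x"
    | "\<not> hit n E w ?P'" "\<forall>x\<in>P. \<not> lp_tight n E w x" "\<forall>x\<in>?P'. \<not> lp_tight n E w x"
    by blast
  then show ?thesis
  proof cases
    case 1
    then show ?thesis
      by (simp add: potential_def potential_nonneg)
  next
    case 2
    then obtain m where m: "m \<in> P" "lp_tight n E w m" "max_tight_cost n E w P = Cost n w m"
      using max_tight_cost_attained by metis
    have "m \<in> ?P'"
      using lp_tight_in_semo_update[OF vi m(1,2)] .
    then have "max_tight_cost n E w P \<le> max_tight_cost n E w ?P'"
      using max_tight_cost_ge m(2,3) by metis
    then have "(2::real) ^ (?L - max_tight_cost n E w ?P') \<le> 2 ^ (?L - max_tight_cost n E w P)"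
      by (intro power_increasing) auto
    with 2 \<open>m \<in> ?P'\<close> m(2) nh ne show ?thesis
      unfolding potential_def by auto
  next
    case 3
    have "(2::real) ^ (?L - max_tight_cost n E w ?P') \<le> 2 ^ ?L"
      by (intro power_increasing) auto
    also have "\<dots> \<le> 2 ^ ?L * (1 + real (min_cost n w P))"
      by simp
    finally show ?thesis
      using 3 nh ne unfolding potential_def by auto
  next
    case 4
    obtain m where m: "m \<in> P" "min_cost n w P = Cost n w m"
      using min_cost_attained[OF ne(1)] .
    obtain z where "z \<in> ?P'" "Cost n w z \<le> Cost n w m"
      using semo_update_keeps_cost[OF m(1)] .
    then have "min_cost n w ?P' \<le> min_cost n w P"
      using min_cost_le[of z ?P' n w] m(2) by simp
    then show ?thesis
      using 4 nh ne unfolding potential_def by auto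
  qed
qed

lemma potential_semo_update_tight:
  assumes vi: "valid_instance n E w" and nh: "\<not> hit n E w P"
    and y: "y \<in> P" "lp_tight n E w y" and tight: "lp_tight n E w x'"
    and gt: "max_tight_cost n E w P < Cost n w x'"
  shows "potential n E w (semo_update n E w P x') \<le> potential n E w P / 2"
proof (cases "hit n E w (semo_update n E w P x')")
  case False
  let ?P' = "semo_update n E w P x'" and ?L = "OPT n E w"
  have x'_in: "x' \<in> ?P'"
    using semo_update_accepts_tight[OF vi tight] max_tight_cost_ge gt by (meson order.strict_trans1)
  then obtain m where m: "lp_tight n E w m" "max_tight_cost n E w ?P' = Cost n w m"
    using max_tight_cost_attained[OF _ tight] by metis
  have "max_tight_cost n E w ?P' \<le> ?L"
    using lp_tight_Cost_le_OPT[OF vi m(1)] m(2) by simp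
  moreover have "max_tight_cost n E w P < max_tight_cost n E w ?P'"
    using max_tight_cost_ge[OF x'_in tight] gt by simp
  ultimately have exponent: "?L - max_tight_cost n E w P
      = Suc (?L - max_tight_cost n E w ?P' + (max_tight_cost n E w ?P' - Suc (max_tight_cost n E w P)))"
    by simp
  have "(2::real) ^ (?L - max_tight_cost n E w P) = 2 * 2 ^ (?L - max_tight_cost n E w ?P')
      * 2 ^ (max_tight_cost n E w ?P' - Suc (max_tight_cost n E w P))"
    by (simp only: exponent power_add power_Suc mult.assoc)
  then have "2 * (2::real) ^ (?L - max_tight_cost n E w ?P') \<le> 2 ^ (?L - max_tight_cost n E w P)"
    by simp
  with y x'_in tight nh False show ?thesis
    unfolding potential_def by auto
qed (simp add: potential_def potential_nonneg)

lemma potential_semo_update_cheaper: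
  assumes lt: "\<And>z. z \<in> P \<Longrightarrow> Cost n w x' < Cost n w z"
  shows "potential n E w (semo_update n E w P x') \<le> 2 ^ OPT n E w * (1 + real (Cost n w x'))"
proof -
  let ?P' = "semo_update n E w P x'" and ?L = "OPT n E w"
  have x'_in: "x' \<in> ?P'"
    using semo_update_accepts_cheaper[OF lt] .
  have "(2::real) ^ (?L - max_tight_cost n E w ?P') \<le> 2 ^ ?L"
    by (intro power_increasing) auto
  also have "\<dots> \<le> 2 ^ ?L * (1 + real (Cost n w x'))"
    by simp
  finally show ?thesis
    using min_cost_le[OF x'_in, of n w] x'_in unfolding potential_def by auto
qed

subsection \<open>Expected decrease of the potential in one iteration\<close>

lemma expectation_bind_pmf:
  fixes f :: "'b \<Rightarrow> real"
  assumes "\<And>x. \<bar>f x\<bar> \<le> B"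
  shows "measure_pmf.expectation (bind_pmf M N) f
           = measure_pmf.expectation M (\<lambda>x. measure_pmf.expectation (N x) f)"
  unfolding measure_pmf_bind
  by (rule integral_bind[where K = "count_space UNIV" and B = B and B' = 1])
     (auto simp: assms measure_pmf.emeasure_space_1 measure_pmf_in_subprob_algebra
           intro: measure_pmf.finite_measure_axioms)

lemma expectation_le_sub_point_masses:
  fixes g :: "'a \<Rightarrow> real" and M :: "'a pmf"
  assumes bnd: "\<And>z. \<bar>g z\<bar> \<le> B" and le_U: "\<And>z. z \<in> set_pmf M \<Longrightarrow> g z \<le> U"
    and fin: "finite V" and inj: "inj_on p V"
    and drop: "\<And>v. v \<in> V \<Longrightarrow> g (p v) \<le> U - d v" and d: "\<And>v. v \<in> V \<Longrightarrow> 0 \<le> d v"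
    and q: "\<And>v. v \<in> V \<Longrightarrow> q \<le> pmf M (p v)"
  shows "measure_pmf.expectation M g \<le> U - q * (\<Sum>v\<in>V. d v)"
proof -
  define h where "h z = U - (\<Sum>v\<in>V. d v * indicator {p v} z)" for z
  have ind_int: "integrable (measure_pmf M) (\<lambda>z. d v * indicator {p v} z)" for v
    by (intro integrable_mult_right)
       (auto intro!: integrable_real_indicator simp: less_top[symmetric] measure_pmf.emeasure_finite)
  have g_le_h: "g z \<le> h z" if z: "z \<in> set_pmf M" for z
  proof (cases "z \<in> p ` V")
    case True
    then obtain v0 where v0: "v0 \<in> V" "z = p v0"
      by blast
    have "(\<Sum>v\<in>V. d v * indicator {p v} z) = (\<Sum>v\<in>V. if v = v0 then d v else 0)"
      using inj v0 by (intro sum.cong) (auto simp: indicator_def inj_on_def)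
    also have "\<dots> = d v0"
      using v0 fin by simp
    finally show ?thesis
      unfolding h_def using drop[OF v0(1)] v0 by simp
  next
    case False
    then have "(\<Sum>v\<in>V. d v * indicator {p v} z) = 0"
      by (intro sum.neutral) (auto simp: indicator_def)
    then show ?thesis
      unfolding h_def using le_U[OF z] by simp
  qed
  have "measure_pmf.expectation M g \<le> measure_pmf.expectation M h"
  proof (rule integral_mono_AE)
    show "integrable (measure_pmf M) g"
      by (rule measure_pmf.integrable_const_bound[where B = B]) (auto simp: bnd)
    show "integrable (measure_pmf M) h"
      unfolding h_def by (intro Bochner_Integration.integrable_diff Bochner_Integration.integrable_sum ind_int) auto
  qed (use g_le_h in \<open>auto simp: AE_measure_pmf_iff\<close>)
  also have "measure_pmf.expectation M h = U - (\<Sum>v\<in>V. d v * pmf M (p v))"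
    unfolding h_def
    by (subst Bochner_Integration.integral_diff, simp, intro Bochner_Integration.integrable_sum ind_int,
        subst Bochner_Integration.integral_sum, rule ind_int) (simp add: measure_pmf_single)
  also have "\<dots> \<le> U - (\<Sum>v\<in>V. q * d v)"
    using q d by (intro diff_left_mono sum_mono) (metis mult.commute mult_left_mono)
  finally show ?thesis
    by (simp add: sum_distrib_left)
qed

lemma one_minus_inverse_power_ge:
  assumes "2 \<le> n"
  shows "1/3 \<le> (1 - 1 / real n) ^ (n - 1)"
proof -
  obtain m where nm: "n = Suc m" and m: "1 \<le> real m"
    using assms by (cases n) auto
  have "(1 + 1 / real m) ^ m \<le> exp (1 / real m) ^ m"
    using exp_ge_add_one_self[of "1 / real m"] m by (intro power_mono) auto
  also have "\<dots> = exp 1"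
    using m by (simp add: exp_of_nat_mult[symmetric])
  also have "\<dots> \<le> 3"
    by (rule exp_le)
  finally have le3: "(1 + 1 / real m) ^ m \<le> 3" .
  have "1 - 1 / real (Suc m) = 1 / (1 + 1 / real m)"
    using m by (simp add: field_simps)
  then have "(1 - 1 / real (Suc m)) ^ m = 1 / (1 + 1 / real m) ^ m"
    by (simp add: power_one_over)
  moreover have "0 < (1 + 1 / real m) ^ m"
    using m by (intro zero_less_power) (simp add: add_pos_nonneg)
  ultimately show ?thesis
    using le3 nm by (simp add: field_simps)
qed

text \<open>Only the branch \<open>b = 0\<close> of the mutation operator is used: it flips exactly bit \<open>v\<close>
  with probability \<open>(1/n) (1 - 1/n)^(n-1)\<close>.\<close>
lemma pmf_mutate_flip_ge:
  assumes n: "2 \<le> n" and v: "v < n"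
  shows "1 / (6 * real n) \<le> pmf (mutate n E x) (x(v := \<not> x v))"
proof -
  let ?M = "\<lambda>b. Pi_pmf {..<n} False (\<lambda>i. bernoulli_pmf (if b \<and> nonisolated E x i then 1/2 else 1 / real n))"
  let ?flip = "\<lambda>fl i. x i \<noteq> fl i" and ?fl = "\<lambda>i. i = v"
  have n0: "0 < real n" "1 / real n \<le> 1"
    using n by auto
  have "pmf (?M False) ?fl = (\<Prod>i\<in>{..<n}. if i = v then 1 / real n else 1 - 1 / real n)"
    using v n0 by (subst pmf_Pi) (auto intro!: prod.cong)
  also have "\<dots> = 1 / real n * (1 - 1 / real n) ^ (n - 1)"
    using v by (subst prod.remove[of _ v]) (auto simp: prod_constant)
  finally have pf: "pmf (?M False) ?fl = 1 / real n * (1 - 1 / real n) ^ (n - 1)" .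
  have "pmf (?M False) ?fl \<le> pmf (map_pmf ?flip (?M False)) (x(v := \<not> x v))"
  proof -
    have "pmf (?M False) ?fl = measure_pmf.prob (?M False) {?fl}"
      by (simp add: measure_pmf_single)
    also have "\<dots> \<le> measure_pmf.prob (?M False) (?flip -` {x(v := \<not> x v)})"
      by (intro measure_pmf.finite_measure_mono) auto
    finally show ?thesis
      by (simp add: pmf_map)
  qed
  moreover have "pmf (mutate n E x) (x(v := \<not> x v))
      = 1/2 * pmf (map_pmf ?flip (?M True)) (x(v := \<not> x v))
        + 1/2 * pmf (map_pmf ?flip (?M False)) (x(v := \<not> x v))"
    unfolding mutate_def by (simp add: pmf_bind integral_bernoulli_pmf)
  ultimately have "1/2 * (1 / real n * (1 - 1 / real n) ^ (n - 1)) \<le> pmf (mutate n E x) (x(v := \<not> x v))"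
    using pf pmf_nonneg[of "map_pmf ?flip (?M True)" "x(v := \<not> x v)"] by linarith
  moreover have "1/2 * (1 / real n * (1/3)) \<le> 1/2 * (1 / real n * (1 - 1 / real n) ^ (n - 1))"
    using one_minus_inverse_power_ge[OF n] n0 by (intro mult_left_mono) auto
  ultimately show ?thesis
    by simp
qed

lemma average_le_sub:
  fixes F :: "'a \<Rightarrow> real"
  assumes "finite P" "m \<in> P" "\<And>x. x \<in> P \<Longrightarrow> F x \<le> U" "F m \<le> U - c"
  shows "(\<Sum>x\<in>P. F x) / real (card P) \<le> U - c / real (card P)"
proof -
  have card: "1 \<le> card P"
    using assms(1,2) card_gt_0_iff by (metis Suc_leI One_nat_def empty_iff)
  have "(\<Sum>x\<in>P. F x) = F m + (\<Sum>x\<in>P - {m}. F x)"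
    using assms(1,2) by (simp add: sum.remove)
  also have "\<dots> \<le> (U - c) + (\<Sum>x\<in>P - {m}. U)"
    using assms by (intro add_mono sum_mono) auto
  also have "\<dots> = real (card P) * U - c"
    using assms(1,2) card by (simp add: card_Diff_singleton of_nat_diff algebra_simps)
  finally have "(\<Sum>x\<in>P. F x) \<le> real (card P) * U - c" .
  then show ?thesis
    using card by (simp add: field_simps)
qed

lemma potential_semo_update_mutate_le:
  assumes vi: "valid_instance n E w" and inv: "semo_invariant n E w P" and nh: "\<not> hit n E w P"
    and x: "x \<in> P" and x': "x' \<in> set_pmf (mutate n E x)"
  shows "potential n E w (semo_update n E w P x') \<le> potential n E w P"
proof -
  have "in_search_space n x"
    using inv x by (simp add: semo_invariant_def)
  then show ?thesis
    by (intro potential_semo_update_le[OF vi inv nh] in_search_space_mutate[OF _ x'])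
qed

lemma expectation_potential_mutate_le:
  assumes vi: "valid_instance n E w" and inv: "semo_invariant n E w P" and nh: "\<not> hit n E w P"
    and x: "x \<in> P"
  shows "measure_pmf.expectation (mutate n E x) (\<lambda>x'. potential n E w (semo_update n E w P x'))
           \<le> potential n E w P"
proof (intro measure_pmf.integral_le_const)
  show "integrable (mutate n E x) (\<lambda>x'. potential n E w (semo_update n E w P x'))"
    by (rule measure_pmf.integrable_const_bound[where B = "2 ^ OPT n E w * (1 + real (\<Sum>i<n. w i))"])
       (auto simp: abs_potential_le simp del: of_nat_sum)
  show "AE x' in mutate n E x. potential n E w (semo_update n E w P x') \<le> potential n E w P"
    using potential_semo_update_mutate_le[OF vi inv nh x] by (simp add: AE_measure_pmf_iff)
qed

text \<open>A point of maximal cost among the tight ones is not the target, so selecting one more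
  vertex keeps it tight and halves the potential.\<close>
lemma improving_parent_tight:
  assumes vi: "valid_instance n E w" and n: "2 \<le> n" and inv: "semo_invariant n E w P"
    and nh: "\<not> hit n E w P" and y: "y \<in> P" "lp_tight n E w y"
  obtains m where "m \<in> P"
    "measure_pmf.expectation (mutate n E m) (\<lambda>x'. potential n E w (semo_update n E w P x'))
       \<le> potential n E w P - potential n E w P / (12 * real n)"
proof -
  let ?U = "potential n E w P"
  obtain m where m: "m \<in> P" "lp_tight n E w m" "max_tight_cost n E w P = Cost n w m"
    using max_tight_cost_attained[OF y] .
  have "\<not> good_solution n E w m"
    using nh m(1) unfolding hit_def by blast
  then obtain v where v: "v < n" "\<not> m v" "lp_tight n E w (m(v := True))"
    using lp_tight_extend[OF vi m(2)] by blast
  have "max_tight_cost n E w P < Cost n w (m(v := True))"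
    using Cost_select[of v n m w, OF v(1,2)] m(3) vi v(1) by (simp add: valid_instance_def)
  then have half: "potential n E w (semo_update n E w P (m(v := \<not> m v))) \<le> ?U - ?U / 2"
    using potential_semo_update_tight[OF vi nh y v(3)] v(2) by simp
  have "measure_pmf.expectation (mutate n E m) (\<lambda>x'. potential n E w (semo_update n E w P x'))
          \<le> ?U - 1 / (6 * real n) * (\<Sum>u\<in>{v}. ?U / 2)"
  proof (rule expectation_le_sub_point_masses[where B = "2 ^ OPT n E w * (1 + real (\<Sum>i<n. w i))"
        and p = "\<lambda>u. m(u := \<not> m u)"])
    show "z \<in> set_pmf (mutate n E m) \<Longrightarrow> potential n E w (semo_update n E w P z) \<le> ?U" for z
      by (rule potential_semo_update_mutate_le[OF vi inv nh m(1)])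
    show "u \<in> {v} \<Longrightarrow> 1 / (6 * real n) \<le> pmf (mutate n E m) (m(u := \<not> m u))" for u
      using pmf_mutate_flip_ge[OF n v(1)] by simp
  qed (use half potential_nonneg abs_potential_le in auto)
  then show ?thesis
    using that m(1) by simp
qed

lemma potential_semo_update_deselect:
  assumes vi: "valid_instance n E w"
    and U: "potential n E w P = 2 ^ OPT n E w * (1 + real (Cost n w m))"
    and m: "min_cost n w P = Cost n w m" and u: "u < n" "m u"
  shows "potential n E w (semo_update n E w P (m(u := False)))
           \<le> potential n E w P - 2 ^ OPT n E w * real (w u)"
proof -
  have cost: "Cost n w (m(u := False)) + w u = Cost n w m"
    by (rule Cost_deselect[of u n m w, OF u])
  moreover have "0 < w u"
    using vi u(1) by (simp add: valid_instance_def)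
  ultimately have "Cost n w (m(u := False)) < Cost n w z" if "z \<in> P" for z
    using min_cost_le[OF that, of n w] m by linarith
  then have le: "potential n E w (semo_update n E w P (m(u := False)))
               \<le> 2 ^ OPT n E w * (1 + real (Cost n w (m(u := False))))"
    by (rule potential_semo_update_cheaper)
  have "real (Cost n w (m(u := False))) = real (Cost n w m) - real (w u)"
    using cost by linarith
  then have "2 ^ OPT n E w * (1 + real (Cost n w (m(u := False))))
               = potential n E w P - 2 ^ OPT n E w * real (w u)"
    unfolding U by (simp add: right_diff_distrib distrib_left)
  with le show ?thesis
    by (simp only:)
qed

text \<open>Without tight points, removing any selected vertex from a cheapest point is accepted; these
  single-bit deletions together lower the potential by \<open>2 ^ OPT\<close> times that point's cost.\<close>
lemma improving_parent_untight:
  assumes vi: "valid_instance n E w" and n: "2 \<le> n" and inv: "semo_invariant n E w P"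
    and nh: "\<not> hit n E w P" and untight: "\<forall>x\<in>P. \<not> lp_tight n E w x"
  obtains m where "m \<in> P"
    "measure_pmf.expectation (mutate n E m) (\<lambda>x'. potential n E w (semo_update n E w P x'))
       \<le> potential n E w P - potential n E w P / (12 * real n)"
proof -
  let ?U = "potential n E w P" and ?L = "OPT n E w"
  have ne: "P \<noteq> {}"
    using inv by (simp add: semo_invariant_def)
  obtain m where m: "m \<in> P" "min_cost n w P = Cost n w m"
    using min_cost_attained[OF ne] .
  have U: "?U = 2 ^ ?L * (1 + real (Cost n w m))"
    using untight nh ne m(2) unfolding potential_def by simp
  have "m \<noteq> zeros"
    using untight m(1) lp_tight_zeros by blast
  then have "Cost n w m \<noteq> 0"
    using Cost_eq_zero_iff[OF vi] inv m(1) unfolding semo_invariant_def by blast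
  then have U_half: "?U / 2 \<le> 2 ^ ?L * real (Cost n w m)"
    unfolding U by (simp add: algebra_simps)
  define V where "V = {u. u < n \<and> m u}"
  have drop: "potential n E w (semo_update n E w P (m(u := \<not> m u))) \<le> ?U - 2 ^ ?L * real (w u)"
    if "u \<in> V" for u
    using that potential_semo_update_deselect[OF vi U m(2), of u] unfolding V_def by simp
  have "measure_pmf.expectation (mutate n E m) (\<lambda>x'. potential n E w (semo_update n E w P x'))
          \<le> ?U - 1 / (6 * real n) * (\<Sum>u\<in>V. 2 ^ ?L * real (w u))"
  proof (rule expectation_le_sub_point_masses[where B = "2 ^ OPT n E w * (1 + real (\<Sum>i<n. w i))"
        and p = "\<lambda>u. m(u := \<not> m u)"])
    show "z \<in> set_pmf (mutate n E m) \<Longrightarrow> potential n E w (semo_update n E w P z) \<le> ?U" for z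
      by (rule potential_semo_update_mutate_le[OF vi inv nh m(1)])
    show "inj_on (\<lambda>u. m(u := \<not> m u)) V"
      by (auto simp: inj_on_def fun_eq_iff)
    show "1 / (6 * real n) \<le> pmf (mutate n E m) (m(u := \<not> m u))" if "u \<in> V" for u
      using that by (intro pmf_mutate_flip_ge[OF n]) (simp add: V_def)
  qed (use drop abs_potential_le in \<open>auto simp: V_def\<close>)
  also have "(\<Sum>u\<in>V. 2 ^ ?L * real (w u)) = 2 ^ ?L * real (Cost n w m)"
    unfolding V_def Cost_def by (simp add: sum_distrib_left)
  also have "?U - 1 / (6 * real n) * (2 ^ ?L * real (Cost n w m)) \<le> ?U - ?U / (12 * real n)"
  proof -
    have "?U / (12 * real n) = 1 / (6 * real n) * (?U / 2)"
      by simp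
    also have "\<dots> \<le> 1 / (6 * real n) * (2 ^ ?L * real (Cost n w m))"
      using U_half by (intro mult_left_mono) auto
    finally show ?thesis
      by simp
  qed
  finally show ?thesis
    using that m(1) by blast
qed

lemma expectation_potential_semo_step_le:
  assumes vi: "valid_instance n E w" and n: "2 \<le> n" and inv: "semo_invariant n E w P"
    and nh: "\<not> hit n E w P"
  shows "measure_pmf.expectation (semo_step n E w P) (potential n E w)
           \<le> (1 - 1 / (12 * real n * (2 * real (OPT n E w) + 1))) * potential n E w P"
proof -
  let ?U = "potential n E w P"
  define F where "F x = measure_pmf.expectation (mutate n E x)
                          (\<lambda>x'. potential n E w (semo_update n E w P x'))" for x
  have fin: "finite P" and ne: "P \<noteq> {}"
    using inv by (auto simp: semo_invariant_def)
  have F_le: "F x \<le> ?U" if "x \<in> P" for x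
    unfolding F_def using that by (rule expectation_potential_mutate_le[OF vi inv nh])
  obtain m where m: "m \<in> P" "F m \<le> ?U - ?U / (12 * real n)"
    unfolding F_def using improving_parent_tight[OF vi n inv nh] improving_parent_untight[OF vi n inv nh]
    by blast
  have "measure_pmf.expectation (semo_step n E w P) (potential n E w) = (\<Sum>x\<in>P. F x) / real (card P)"
    unfolding semo_step_def F_def
    by (subst expectation_bind_pmf[where B = "2 ^ OPT n E w * (1 + real (\<Sum>i<n. w i))"],
        rule abs_potential_le) (simp add: integral_map_pmf integral_pmf_of_set fin ne)
  also have "\<dots> \<le> ?U - ?U / (12 * real n) / real (card P)"
    by (rule average_le_sub[where F = F, OF fin m(1) F_le m(2)])
  also have "\<dots> \<le> (1 - 1 / (12 * real n * (2 * real (OPT n E w) + 1))) * ?U"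
  proof -
    have "?U / (12 * real n * (2 * real (OPT n E w) + 1)) \<le> ?U / (12 * real n) / real (card P)"
      using card_population_le[OF vi inv] fin ne n potential_nonneg[of n E w P]
      by (auto simp: card_gt_0_iff intro!: divide_left_mono mult_pos_pos)
    then show ?thesis
      by (simp add: algebra_simps)
  qed
  finally show ?thesis .
qed

subsection \<open>Multiplicative drift\<close>

lemma semo_invariant_stopped_pop:
  assumes "P \<in> set_pmf (stopped_pop n E w t)"
  shows "semo_invariant n E w P"
  using assms
proof (induction t arbitrary: P)
  case 0
  then obtain x where x: "x \<in> set_pmf (init_point n)" "P = {x}"
    by auto
  have "in_search_space n x"
    using set_Pi_pmf_subset[of "{..<n}" False] x(1) unfolding init_point_def in_search_space_def by fastforce
  with x(2) show ?case
    by (simp add: semo_invariant_def)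
next
  case (Suc t)
  then obtain P0 where P0: "P0 \<in> set_pmf (stopped_pop n E w t)"
    "P \<in> set_pmf (if hit n E w P0 then return_pmf P0 else semo_step n E w P0)"
    by auto
  have inv: "semo_invariant n E w P0"
    using Suc.IH[OF P0(1)] .
  show ?case
  proof (cases "hit n E w P0")
    case False
    with P0(2) obtain x x' where x: "x \<in> set_pmf (pmf_of_set P0)" and x': "x' \<in> set_pmf (mutate n E x)"
      and P: "P = semo_update n E w P0 x'"
      unfolding semo_step_def by auto
    have "finite P0" "P0 \<noteq> {}"
      using inv by (auto simp: semo_invariant_def)
    with x inv have "in_search_space n x"
      by (simp add: semo_invariant_def)
    then show ?thesis
      unfolding P by (intro semo_invariant_update[OF inv] in_search_space_mutate[OF _ x'])
  qed (use P0 inv in auto)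
qed

lemma expectation_abs_le:
  fixes f :: "'a \<Rightarrow> real"
  assumes "\<And>x. \<bar>f x\<bar> \<le> B"
  shows "\<bar>measure_pmf.expectation M f\<bar> \<le> B"
proof -
  have "\<bar>measure_pmf.expectation M f\<bar> \<le> measure_pmf.expectation M (\<lambda>x. \<bar>f x\<bar>)"
    by (rule integral_abs_bound)
  also have "\<dots> \<le> B"
    by (intro measure_pmf.integral_le_const measure_pmf.integrable_const_bound[where B = B])
       (auto simp: assms)
  finally show ?thesis .
qed

lemma expectation_iterate_le:
  fixes M :: "nat \<Rightarrow> 'a pmf" and \<Phi> :: "'a \<Rightarrow> real"
  assumes step: "\<And>t. M (Suc t) = bind_pmf (M t) N"
    and \<Phi>: "\<And>x. 0 \<le> \<Phi> x" "\<And>x. \<Phi> x \<le> K"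
    and drift: "\<And>t x. x \<in> set_pmf (M t) \<Longrightarrow> measure_pmf.expectation (N x) \<Phi> \<le> (1 - d) * \<Phi> x"
    and d: "0 \<le> d" "d \<le> 1"
  shows "measure_pmf.expectation (M t) \<Phi> \<le> (1 - d) ^ t * K"
proof (induction t)
  have abs_\<Phi>: "\<bar>\<Phi> x\<bar> \<le> K" for x
    using \<Phi>[of x] by simp
  case 0
  show ?case
    by (auto intro!: measure_pmf.integral_le_const measure_pmf.integrable_const_bound[where B = K]
        simp: abs_\<Phi> \<Phi>)
next
  have abs_\<Phi>: "\<bar>\<Phi> x\<bar> \<le> K" for x
    using \<Phi>[of x] by simp
  case (Suc t)
  have "measure_pmf.expectation (M (Suc t)) \<Phi>
          = measure_pmf.expectation (M t) (\<lambda>x. measure_pmf.expectation (N x) \<Phi>)"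
    unfolding step by (rule expectation_bind_pmf[OF abs_\<Phi>])
  also have "\<dots> \<le> measure_pmf.expectation (M t) (\<lambda>x. (1 - d) * \<Phi> x)"
  proof (rule integral_mono_AE)
    show "integrable (M t) (\<lambda>x. measure_pmf.expectation (N x) \<Phi>)"
      by (rule measure_pmf.integrable_const_bound[where B = K])
         (auto intro: expectation_abs_le abs_\<Phi>)
    show "integrable (M t) (\<lambda>x. (1 - d) * \<Phi> x)"
      by (intro integrable_mult_right measure_pmf.integrable_const_bound[where B = K]) (auto simp: abs_\<Phi>)
  qed (auto simp: AE_measure_pmf_iff drift)
  also have "\<dots> = (1 - d) * measure_pmf.expectation (M t) \<Phi>"
    by simp
  also have "\<dots> \<le> (1 - d) * ((1 - d) ^ t * K)"
    using Suc.IH d by (intro mult_left_mono) auto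
  finally show ?case
    by simp
qed

lemma prob_le_expectation:
  fixes f :: "'a \<Rightarrow> real"
  assumes "\<And>x. x \<in> set_pmf M \<Longrightarrow> x \<in> A \<Longrightarrow> 1 \<le> f x" "\<And>x. 0 \<le> f x" "\<And>x. f x \<le> K"
  shows "measure_pmf.prob M A \<le> measure_pmf.expectation M f"
proof -
  have "measure_pmf.prob M A = measure_pmf.expectation M (indicator A)"
    by simp
  also have "\<dots> \<le> measure_pmf.expectation M f"
  proof (rule integral_mono_AE)
    show "integrable M (indicat_real A)"
      by (auto intro!: integrable_real_indicator simp: less_top[symmetric] measure_pmf.emeasure_finite)
    show "integrable M f"
      by (rule measure_pmf.integrable_const_bound[where B = K]) (use assms(2,3) in auto)
  qed (use assms(1,2) in \<open>auto simp: AE_measure_pmf_iff indicator_def\<close>)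
  finally show ?thesis .
qed

lemma power_one_minus_mult_le_one:
  fixes d K :: real
  assumes d: "0 < d" "d < 1" and K: "1 \<le> K" and T: "ln K / d \<le> real T"
  shows "(1 - d) ^ T * K \<le> 1"
proof -
  have "(1 - d) ^ T \<le> exp (- d) ^ T"
    using d exp_ge_add_one_self[of "- d"] by (intro power_mono) auto
  also have "\<dots> = exp (- (d * real T))"
    by (simp add: exp_of_nat_mult[symmetric] mult.commute)
  also have "\<dots> \<le> exp (- ln K)"
    using T d by (simp add: field_simps)
  also have "\<dots> = 1 / K"
    using K by (simp add: exp_minus inverse_eq_divide)
  finally show ?thesis
    using K by (simp add: field_simps)
qed

text \<open>Bound \<open>p t\<close> by 1 up to \<open>T = \<lceil>ln K / d\<rceil>\<close>, where \<open>(1 - d)^T K \<le> 1\<close>, and geometrically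
  afterwards.\<close>
lemma suminf_le_geometric_tail:
  fixes p :: "nat \<Rightarrow> real"
  assumes p: "\<And>t. 0 \<le> p t" "\<And>t. p t \<le> 1" "\<And>t. p t \<le> (1 - d) ^ t * K"
    and d: "0 < d" "d < 1" and K: "1 \<le> K"
  shows "(\<Sum>t. ennreal (p t)) \<le> ennreal ((1 + ln K) / d + 1)"
proof -
  define T where "T = nat \<lceil>ln K / d\<rceil>"
  have lnK: "0 \<le> ln K"
    using K by simp
  have "real T = of_int \<lceil>ln K / d\<rceil>"
    unfolding T_def using lnK d by simp
  then have T: "ln K / d \<le> real T" "real T \<le> ln K / d + 1"
    by linarith+
  have decay: "(1 - d) ^ T * K \<le> 1"
    using power_one_minus_mult_le_one[OF d K T(1)] .
  define b where "b t = (if t < T then 1 else (1 - d) ^ (t - T))" for t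
  have p_le_b: "p t \<le> b t" for t
  proof (cases "t < T")
    case False
    have "p t \<le> (1 - d) ^ t * K"
      by (rule p(3))
    also have "\<dots> = (1 - d) ^ (t - T) * ((1 - d) ^ T * K)"
      using False by (simp add: power_add[symmetric])
    also have "\<dots> \<le> (1 - d) ^ (t - T)"
      using decay d by (simp add: mult_left_le)
    finally show ?thesis
      using False unfolding b_def by simp
  qed (use p(2) in \<open>simp add: b_def\<close>)
  have b_nonneg: "0 \<le> b t" for t
    unfolding b_def using d by auto
  have "summable (\<lambda>t. b (t + T))"
    unfolding b_def using d by (simp add: summable_geometric)
  then have b_summable: "summable b"
    by (simp add: summable_iff_shift)
  have "(\<Sum>t. b t) = (\<Sum>t. b (t + T)) + sum b {..<T}"
    by (rule suminf_split_initial_segment[OF b_summable])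
  also have "\<dots> = 1 / d + real T"
    using d unfolding b_def by (simp add: suminf_geometric)
  finally have "(\<Sum>t. b t) \<le> (1 + ln K) / d + 1"
    using T(2) by (simp add: add_divide_distrib)
  have "(\<Sum>t. ennreal (p t)) \<le> (\<Sum>t. ennreal (b t))"
    by (intro suminf_le ennreal_leI p_le_b) auto
  also have "\<dots> = ennreal (\<Sum>t. b t)"
    by (rule suminf_ennreal2[OF b_nonneg b_summable])
  also have "\<dots> \<le> ennreal ((1 + ln K) / d + 1)"
    using \<open>(\<Sum>t. b t) \<le> (1 + ln K) / d + 1\<close> by (rule ennreal_leI)
  finally show ?thesis .
qed

lemma expected_hitting_time_le:
  assumes vi: "valid_instance n E w" and n: "2 \<le> n"
  defines "d \<equiv> 1 / (12 * real n * (2 * real (OPT n E w) + 1))"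
    and "K \<equiv> 2 ^ OPT n E w * (1 + real (\<Sum>i<n. w i))"
  shows "expected_hitting_time n E w \<le> ennreal ((1 + ln K) / d + 1)"
  unfolding expected_hitting_time_def
proof (rule suminf_le_geometric_tail)
  have "1 \<le> 12 * real n * (2 * real (OPT n E w) + 1)"
    using n mult_mono[of 1 "12 * real n" 1 "2 * real (OPT n E w) + 1"] by simp
  moreover have "24 \<le> 12 * real n * (2 * real (OPT n E w) + 1)"
    using n mult_mono[of 24 "12 * real n" 1 "2 * real (OPT n E w) + 1"] by simp
  ultimately show d: "0 < d" "d < 1"
    unfolding d_def by (auto simp: field_simps)
  show "1 \<le> K"
    unfolding K_def using mult_mono[of 1 "(2::real) ^ OPT n E w" 1 "1 + real (\<Sum>i<n. w i)"]
    by (simp del: of_nat_sum)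
  fix t
  let ?M = "stopped_pop n E w t" and ?nh = "{P. \<not> hit n E w P}"
  show "0 \<le> measure_pmf.prob ?M ?nh" "measure_pmf.prob ?M ?nh \<le> 1"
    by simp_all
  have "measure_pmf.prob ?M ?nh \<le> measure_pmf.expectation ?M (potential n E w)"
    using semo_invariant_stopped_pop one_le_potential potential_nonneg potential_le
    by (intro prob_le_expectation[where K = K]) (auto simp: semo_invariant_def K_def)
  also have "\<dots> \<le> (1 - d) ^ t * K"
  proof (rule expectation_iterate_le[where M = "stopped_pop n E w" and \<Phi> = "potential n E w"])
    show "stopped_pop n E w (Suc s)
            = stopped_pop n E w s \<bind> (\<lambda>P. if hit n E w P then return_pmf P else semo_step n E w P)" for s
      by simp
    show "potential n E w P \<le> K" for P
      unfolding K_def by (rule potential_le)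
    show "measure_pmf.expectation (if hit n E w P then return_pmf P else semo_step n E w P) (potential n E w)
            \<le> (1 - d) * potential n E w P" if P: "P \<in> set_pmf (stopped_pop n E w s)" for s P
    proof (cases "hit n E w P")
      case False
      then show ?thesis
        using expectation_potential_semo_step_le[OF vi n semo_invariant_stopped_pop[OF P]]
        unfolding d_def by simp
    qed (simp add: potential_def)
  qed (use d potential_nonneg in auto)
  finally show "measure_pmf.prob ?M ?nh \<le> (1 - d) ^ t * K" .
qed

lemma drift_time_le:
  fixes L :: nat and m W S :: real
  assumes L: "1 \<le> L" and m: "2 \<le> m" and W: "1 \<le> W" and S: "0 \<le> S" "S \<le> m * W"
  shows "(1 + ln (2 ^ L * (1 + S))) * (12 * m * (2 * real L + 1)) + 1
           \<le> 200 * real L * m * (ln W + ln m + real L)"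
proof -
  define X where "X = ln W + ln m + real L"
  have ln: "0 \<le> ln W" "0 \<le> ln m" "ln (2::real) \<le> 1" and L': "1 \<le> real L"
    using W m L ln_2_less_1 by auto
  have X: "1 \<le> X"
    unfolding X_def using ln L' by simp
  have "1 + S \<le> 2 * m * W"
    using S mult_mono[of 1 m 1 W] m W by simp
  then have "ln (1 + S) \<le> ln (2 * m * W)"
    using S by (intro ln_mono) auto
  also have "\<dots> = ln 2 + ln m + ln W"
    using m W by (simp add: ln_mult)
  finally have ln_S: "ln (1 + S) \<le> ln 2 + ln m + ln W" .
  have "ln (2 ^ L * (1 + S)) = real L * ln 2 + ln (1 + S)"
    using S by (simp add: ln_mult ln_realpow)
  moreover have "real L * ln 2 \<le> real L"
    using ln(3) by (simp add: mult_left_le)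
  ultimately have "1 + ln (2 ^ L * (1 + S)) \<le> 3 * X"
    unfolding X_def using ln_S ln L' by (smt (verit))
  moreover have "12 * m * (2 * real L + 1) \<le> 36 * (m * real L)"
    using L' m by (simp add: algebra_simps)
  moreover have "0 \<le> 1 + ln (2 ^ L * (1 + S))"
  proof -
    have "1 \<le> (2::real) ^ L * (1 + S)"
      using mult_mono[of 1 "(2::real) ^ L" 1 "1 + S"] S by simp
    then show ?thesis
      by simp
  qed
  moreover have "0 \<le> 12 * m * (2 * real L + 1)"
    using m by simp
  ultimately have "(1 + ln (2 ^ L * (1 + S))) * (12 * m * (2 * real L + 1)) \<le> (3 * X) * (36 * (m * real L))"
    by (rule mult_mono')
  moreover have "1 \<le> m * real L * X"
    using mult_mono[of 1 "m * real L" 1 X] mult_mono[of 1 m 1 "real L"] L' m X by simp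
  ultimately show ?thesis
    unfolding X_def by (simp add: algebra_simps)
qed

lemma two_le_card_vertices:
  assumes vi: "valid_instance n E w" and ne: "E \<noteq> {}"
  shows "2 \<le> n"
proof -
  obtain e where "e \<in> E"
    using ne by blast
  then obtain i j where "i \<noteq> j" "i < n" "j < n"
    by (rule valid_instance_edgeE[OF vi])
  then show ?thesis
    by linarith
qed

lemma total_weight_le_Wmax:
  assumes vi: "valid_instance n E w" and n: "1 \<le> n"
  shows "real (\<Sum>i<n. w i) \<le> real n * real (Wmax n w)" "1 \<le> Wmax n w"
proof -
  have w_le: "w i \<le> Wmax n w" if "i < n" for i
    unfolding Wmax_def using that by (intro Max_ge) auto
  then have "(\<Sum>i<n. w i) \<le> (\<Sum>i<n. Wmax n w)"
    by (intro sum_mono) auto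
  then have "real (\<Sum>i<n. w i) \<le> real (n * Wmax n w)"
    by (intro of_nat_mono) simp
  then show "real (\<Sum>i<n. w i) \<le> real n * real (Wmax n w)"
    by simp
  have "w 0 \<le> Wmax n w" "0 < w 0"
    using w_le[of 0] vi n by (auto simp: valid_instance_def)
  then show "1 \<le> Wmax n w"
    by linarith
qed

theorem lemma5:
  "\<exists>C::real. C > 0 \<and>
     (\<forall>n E w. valid_instance n E w \<and> E \<noteq> {} \<longrightarrow>
        expected_hitting_time n E w
          \<le> ennreal (C * real (OPT n E w) * real n *
                (ln (real (Wmax n w)) + ln (real n) + real (OPT n E w))))"
proof (intro exI[of _ 200] conjI allI impI)
  fix n E w assume "valid_instance n E w \<and> E \<noteq> {}"
  then have vi: "valid_instance n E w" and ne: "E \<noteq> {}"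
    by simp_all
  have n: "2 \<le> n"
    using two_le_card_vertices[OF vi ne] .
  let ?d = "1 / (12 * real n * (2 * real (OPT n E w) + 1))"
    and ?K = "2 ^ OPT n E w * (1 + real (\<Sum>i<n. w i))"
  have "expected_hitting_time n E w \<le> ennreal ((1 + ln ?K) / ?d + 1)"
    by (rule expected_hitting_time_le[OF vi n])
  also have "(1 + ln ?K) / ?d + 1 \<le> 200 * real (OPT n E w) * real n *
                (ln (real (Wmax n w)) + ln (real n) + real (OPT n E w))"
    using drift_time_le[OF one_le_OPT[OF vi ne], of "real n" "real (Wmax n w)" "real (\<Sum>i<n. w i)"]
      total_weight_le_Wmax[OF vi] n by (simp del: of_nat_sum)
  finally show "expected_hitting_time n E w \<le> ennreal (200 * real (OPT n E w) * real n *
                (ln (real (Wmax n w)) + ln (real n) + real (OPT n E w)))"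
    by (simp add: ennreal_leI)
qed (simp)

end
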